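(* Let $I$ be a non-degenerate interval, $f:I\to\mathbb{R}$ continuous and $c\ge1$. (i) If the graph of $f$ is $c$-monotone, then $f$ satisfies condition $\mathsf{P}_c$. (ii) If $f$ satisfies condition $\mathsf{P}_{c-1}$, then the graph of $f$ is symmetrically $c$-monotone.
   Context: For $a\ge0$, $f$ satisfies condition $\mathsf{P}_a$ if $\max_{x\le t\le y}|f(x)-f(t)|\le a|x-y|$ whenever $x<y$ in $I$ and $f(x)=f(y)$. A metric space $(X,d)$ is $c$-monotone if there is a linear order $<$ with $d(x,y)\le c\,d(x,z)$ whenever $x<y<z$, and symmetrically $c$-monotone if there is a linear order $<$ with $\max(d(x,y),d(y,z))\le c\,d(x,z)$ whenever $x<y<z$. The graph $\{(x,f(x)):x\in I\}$ carries the Euclidean metric. *)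

theory Defs
  imports "HOL-Analysis.Analysis"
begin

definition cond_P :: "real \<Rightarrow> real set \<Rightarrow> (real \<Rightarrow> real) \<Rightarrow> bool" where
  "cond_P a I f \<longleftrightarrow>
     (\<forall>x\<in>I. \<forall>y\<in>I. x < y \<and> f x = f y \<longrightarrow>
        (\<forall>t\<in>{x..y}. \<bar>f x - f t\<bar> \<le> a * \<bar>x - y\<bar>))"

definition strict_linear_order_on :: "'a set \<Rightarrow> ('a \<Rightarrow> 'a \<Rightarrow> bool) \<Rightarrow> bool" where
  "strict_linear_order_on S lt \<longleftrightarrow>
     (\<forall>x\<in>S. \<not> lt x x) \<and>
     (\<forall>x\<in>S. \<forall>y\<in>S. \<forall>z\<in>S. lt x y \<and> lt y z \<longrightarrow> lt x z) \<and>
     (\<forall>x\<in>S. \<forall>y\<in>S. x \<noteq> y \<longrightarrow> lt x y \<or> lt y x)"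

definition c_monotone :: "real \<Rightarrow> 'a::metric_space set \<Rightarrow> bool" where
  "c_monotone c S \<longleftrightarrow> (\<exists>lt. strict_linear_order_on S lt \<and>
     (\<forall>x\<in>S. \<forall>y\<in>S. \<forall>z\<in>S. lt x y \<and> lt y z \<longrightarrow> dist x y \<le> c * dist x z))"

definition sym_c_monotone :: "real \<Rightarrow> 'a::metric_space set \<Rightarrow> bool" where
  "sym_c_monotone c S \<longleftrightarrow> (\<exists>lt. strict_linear_order_on S lt \<and>
     (\<forall>x\<in>S. \<forall>y\<in>S. \<forall>z\<in>S. lt x y \<and> lt y z \<longrightarrow>
        max (dist x y) (dist y z) \<le> c * dist x z))"

text \<open>Graph of f over I in the Euclidean plane (dist on real \<times> real is Euclidean).\<close>
definition graph_of :: "real set \<Rightarrow> (real \<Rightarrow> real) \<Rightarrow> (real \<times> real) set" where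
  "graph_of I f = (\<lambda>x. (x, f x)) ` I"

end

theory Submission
  imports Defs
begin

text \<open>
  (i) Order the graph c-monotonically. A point Y of the graph is never between two close points
  of the graph, so a continuous arc of the graph avoiding Y lies entirely on one side of Y.
  Applied to the arcs over [x,t] and [t,y], this puts (t, f t) between (x, f x) and (y, f y),
  and c-monotonicity bounds its distance from an endpoint by c times the distance between
  the endpoints, which is \<bar>x - y\<bar> when f x = f y.

  (ii) Order the graph by abscissa. For x < y < z the intermediate value theorem produces a
  point s beside y with f s equal to f x or f z, and condition P_(c-1) on the level pair
  gives \<bar>f y - f x\<bar>, \<bar>f z - f y\<bar> \<le> \<bar>f z - f x\<bar> + (c - 1)(z - x); an elementary
  inequality turns this into the distance bound.
\<close>

lemma strict_linear_order_on_converse: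
  "strict_linear_order_on S lt \<Longrightarrow> strict_linear_order_on S (\<lambda>x y. lt y x)"
  unfolding strict_linear_order_on_def by meson

lemma strict_linear_order_on_asym:
  "\<lbrakk>strict_linear_order_on S lt; x \<in> S; y \<in> S; lt x y\<rbrakk> \<Longrightarrow> \<not> lt y x"
  unfolding strict_linear_order_on_def by meson

lemma strict_linear_order_on_total:
  "\<lbrakk>strict_linear_order_on S lt; x \<in> S; y \<in> S; x \<noteq> y\<rbrakk> \<Longrightarrow> lt x y \<or> lt y x"
  unfolding strict_linear_order_on_def by meson

text \<open>Unlike c-monotonicity, this weakened bound is invariant under reversing the order,
  so the side lemmas below apply to both sides of a point.\<close>

lemma c_monotone_dist_between:
  fixes S :: "'a::metric_space set"
  assumes mon: "\<forall>x\<in>S. \<forall>y\<in>S. \<forall>z\<in>S. lt x y \<and> lt y z \<longrightarrow> dist x y \<le> c * dist x z"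
    and S: "x \<in> S" "y \<in> S" "z \<in> S"
    and between: "lt x y \<and> lt y z \<or> lt z y \<and> lt y x"
  shows "dist x y \<le> (c + 1) * dist x z"
  using between
proof
  assume "lt x y \<and> lt y z"
  then have "dist x y \<le> c * dist x z" using mon S by blast
  also have "\<dots> \<le> (c + 1) * dist x z" by (simp add: distrib_right)
  finally show ?thesis .
next
  assume "lt z y \<and> lt y x"
  then have "dist z y \<le> c * dist z x" using mon S by blast
  moreover have "dist x y \<le> dist x z + dist z y" by (rule dist_triangle)
  ultimately show ?thesis by (simp add: dist_commute distrib_right)
qed

lemma side_of_point_openin:
  fixes S :: "'a::metric_space set" and g :: "'b::metric_space \<Rightarrow> 'a"
  assumes lin: "strict_linear_order_on S lt"
    and between: "\<And>x y z. \<lbrakk>x \<in> S; y \<in> S; z \<in> S; lt x y \<and> lt y z \<or> lt z y \<and> lt y x\<rbrakk>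
                     \<Longrightarrow> dist x y \<le> K * dist x z"
    and K: "K > 0"
    and g: "continuous_on J g" "g ` J \<subseteq> S" and Y: "Y \<in> S" "Y \<notin> g ` J"
  shows "openin (top_of_set J) {s\<in>J. lt (g s) Y}"
  unfolding openin_euclidean_subtopology_iff
proof (intro conjI ballI)
  fix s assume "s \<in> {s\<in>J. lt (g s) Y}"
  then have s: "s \<in> J" "lt (g s) Y" by auto
  define \<delta> where "\<delta> = dist (g s) Y / K"
  have "g s \<noteq> Y" using s(1) Y(2) by auto
  then have "\<delta> > 0" using K by (simp add: \<delta>_def)
  then obtain e where e: "e > 0" "\<forall>s'\<in>J. dist s' s < e \<longrightarrow> dist (g s') (g s) < \<delta>"
    using g(1) s(1) unfolding continuous_on_iff by metis
  have "lt (g s') Y" if s': "s' \<in> J" "dist s' s < e" for s'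
  proof (rule ccontr)
    assume "\<not> lt (g s') Y"
    moreover have "g s' \<noteq> Y" using s'(1) Y(2) by auto
    ultimately have "lt Y (g s')"
      using strict_linear_order_on_total[OF lin, of "g s'" Y] g(2) Y(1) s'(1) by auto
    then have "dist (g s) Y \<le> K * dist (g s) (g s')"
      using s s' g(2) Y(1) by (intro between) auto
    also have "\<dots> < K * \<delta>"
      using e(2) s' K by (metis dist_commute mult_strict_left_mono)
    finally show False using K by (simp add: \<delta>_def)
  qed
  then show "\<exists>e>0. \<forall>s'\<in>J. dist s' s < e \<longrightarrow> s' \<in> {s\<in>J. lt (g s) Y}"
    using e(1) by blast
qed auto

lemma continuous_image_same_side:
  fixes S :: "'a::metric_space set" and g :: "'b::metric_space \<Rightarrow> 'a"
  assumes lin: "strict_linear_order_on S lt"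
    and between: "\<And>x y z. \<lbrakk>x \<in> S; y \<in> S; z \<in> S; lt x y \<and> lt y z \<or> lt z y \<and> lt y x\<rbrakk>
                     \<Longrightarrow> dist x y \<le> K * dist x z"
    and K: "K > 0" and J: "connected J"
    and g: "continuous_on J g" "g ` J \<subseteq> S" and Y: "Y \<in> S" "Y \<notin> g ` J"
    and ab: "a \<in> J" "b \<in> J"
  shows "lt (g a) Y \<longleftrightarrow> lt (g b) Y"
proof -
  define below where "below = {s\<in>J. lt (g s) Y}"
  define above where "above = {s\<in>J. lt Y (g s)}"
  have open_below: "openin (top_of_set J) below"
    unfolding below_def by (rule side_of_point_openin[OF lin between K g Y])
  have open_above: "openin (top_of_set J) above"
    unfolding above_def
    by (rule side_of_point_openin[OF strict_linear_order_on_converse[OF lin] _ K g Y])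
       (use between in blast)
  have side: "lt (g s) Y \<longleftrightarrow> \<not> lt Y (g s)" if "s \<in> J" for s
  proof -
    have "g s \<in> S" "g s \<noteq> Y" using that g(2) Y(2) by auto
    then show ?thesis
      using strict_linear_order_on_total[OF lin] strict_linear_order_on_asym[OF lin] Y(1) by blast
  qed
  then have "J \<subseteq> below \<union> above" "below \<inter> above = {}"
    unfolding below_def above_def by blast+
  then have "below = {} \<or> above = {}"
    using J open_below open_above unfolding connected_openin by blast
  then show ?thesis
    using side ab unfolding below_def above_def by blast
qed

lemma continuous_injective_arc_between:
  fixes S :: "'a::metric_space set" and g :: "real \<Rightarrow> 'a"
  assumes lin: "strict_linear_order_on S lt"
    and between: "\<And>x y z. \<lbrakk>x \<in> S; y \<in> S; z \<in> S; lt x y \<and> lt y z \<or> lt z y \<and> lt y x\<rbrakk>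
                     \<Longrightarrow> dist x y \<le> K * dist x z"
    and K: "K > 0"
    and g: "continuous_on {x..y} g" "g ` {x..y} \<subseteq> S" "inj_on g {x..y}"
    and t: "x < t" "t < y"
  shows "lt (g x) (g t) \<and> lt (g t) (g y) \<or> lt (g y) (g t) \<and> lt (g t) (g x)"
proof -
  have G: "g x \<in> S" "g y \<in> S" "g t \<in> S" using g(2) t by auto
  have distinct: "g x \<noteq> g t" "g y \<noteq> g t" "g x \<noteq> g y"
    using inj_onD[OF g(3)] t by fastforce+
  have side_y: "lt (g x) (g y) \<longleftrightarrow> lt (g t) (g y)"
  proof (rule continuous_image_same_side[OF lin between K connected_Icc])
    show "g y \<notin> g ` {x..t}" using inj_onD[OF g(3)] t by fastforce
  qed (use g t in \<open>auto intro: continuous_on_subset\<close>)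
  have side_x: "lt (g t) (g x) \<longleftrightarrow> lt (g y) (g x)"
  proof (rule continuous_image_same_side[OF lin between K connected_Icc])
    show "g x \<notin> g ` {t..y}" using inj_onD[OF g(3)] t by fastforce
  qed (use g t in \<open>auto intro: continuous_on_subset\<close>)
  note asym = strict_linear_order_on_asym[OF lin] and total = strict_linear_order_on_total[OF lin]
  show ?thesis
  proof (cases "lt (g x) (g y)")
    case True
    then show ?thesis using side_x side_y asym[OF G(1,2)] total[OF G(1,3)] distinct by blast
  next
    case False
    then show ?thesis using side_x side_y total[OF G(1,2)] total[OF G(2,3)] distinct by blast
  qed
qed

lemma c_monotone_graph_imp_cond_P:
  fixes f :: "real \<Rightarrow> real"
  assumes I: "connected I" and f: "continuous_on I f" and c: "c \<ge> 0"
    and "c_monotone c (graph_of I f)"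
  shows "cond_P c I f"
  unfolding cond_P_def
proof (intro ballI impI)
  define g where "g = (\<lambda>s::real. (s, f s))"
  obtain lt where lin: "strict_linear_order_on (graph_of I f) lt"
    and mon: "\<forall>x\<in>graph_of I f. \<forall>y\<in>graph_of I f. \<forall>z\<in>graph_of I f.
                lt x y \<and> lt y z \<longrightarrow> dist x y \<le> c * dist x z"
    using assms(4) unfolding c_monotone_def by blast
  fix x y t assume x: "x \<in> I" and y: "y \<in> I" and xy: "x < y \<and> f x = f y" and t: "t \<in> {x..y}"
  have "{x..y} \<subseteq> I" using connected_contains_Icc[OF I x y] .
  then have G: "g ` {x..y} \<subseteq> graph_of I f" unfolding graph_of_def g_def by auto
  then have on_graph: "g x \<in> graph_of I f" "g y \<in> graph_of I f" "g t \<in> graph_of I f"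
    using xy t by auto
  have dist_ends: "dist (g x) (g y) = \<bar>x - y\<bar>"
    using xy by (simp add: g_def dist_Pair_Pair dist_real_def)
  have dist_f: "\<bar>f p - f t\<bar> \<le> dist (g p) (g t)" for p
    by (simp add: g_def dist_Pair_Pair dist_real_def real_le_rsqrt)
  show "\<bar>f x - f t\<bar> \<le> c * \<bar>x - y\<bar>"
  proof (cases "t = x \<or> t = y")
    case True
    then show ?thesis using xy c by auto
  next
    case False
    then have "x < t" "t < y" using t by auto
    moreover have "continuous_on {x..y} g"
      unfolding g_def using \<open>{x..y} \<subseteq> I\<close> by (intro continuous_intros continuous_on_subset[OF f])
    moreover have "inj_on g {x..y}" by (simp add: g_def inj_on_def)
    moreover note between = c_monotone_dist_between[OF mon]
    ultimately have "lt (g x) (g t) \<and> lt (g t) (g y) \<or> lt (g y) (g t) \<and> lt (g t) (g x)"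
      using continuous_injective_arc_between[OF lin _ _ _ G] c by fastforce
    then show ?thesis
    proof
      assume "lt (g x) (g t) \<and> lt (g t) (g y)"
      then have "dist (g x) (g t) \<le> c * dist (g x) (g y)" using mon on_graph by blast
      then show ?thesis using dist_f[of x] by (simp add: dist_ends)
    next
      assume "lt (g y) (g t) \<and> lt (g t) (g x)"
      then have "dist (g y) (g t) \<le> c * dist (g y) (g x)" using mon on_graph by blast
      then show ?thesis using dist_f[of y] dist_ends xy by (simp add: dist_commute)
    qed
  qed
qed

lemma cond_P_uminus: "cond_P a I (\<lambda>s. - f s) \<longleftrightarrow> cond_P a I f"
  unfolding cond_P_def by (simp add: abs_minus_commute)

lemma cond_P_le_max:
  fixes f :: "real \<Rightarrow> real"
  assumes I: "connected I" and f: "continuous_on I f" and P: "cond_P a I f" and a: "a \<ge> 0"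
    and x: "x \<in> I" and z: "z \<in> I" and xy: "x < y" and yz: "y < z"
  shows "f y \<le> max (f x) (f z) + a * (z - x)"
proof -
  have sub: "{x..z} \<subseteq> I" using connected_contains_Icc[OF I x z] .
  have level_bound: "\<bar>f y - f u\<bar> \<le> a * (z - x)"
    if "u \<in> {x..z}" "v \<in> {x..z}" "u < v" "y \<in> {u..v}" "f u = f v" for u v
  proof -
    have "\<bar>f u - f y\<bar> \<le> a * \<bar>u - v\<bar>"
      using P that sub unfolding cond_P_def by blast
    also have "\<dots> \<le> a * (z - x)" using that a by (intro mult_left_mono) auto
    finally show ?thesis by (simp add: abs_minus_commute)
  qed
  consider "f y \<le> max (f x) (f z)" | "f x \<le> f z" "f z < f y" | "f z < f x" "f x < f y"
    by linarith
  then show ?thesis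
  proof cases
    case 1
    moreover have "a * (z - x) \<ge> 0" using a xy yz by simp
    ultimately show ?thesis by linarith
  next
    case 2
    have "continuous_on {x..y} f" using sub yz by (intro continuous_on_subset[OF f]) auto
    then obtain s where s: "x \<le> s" "s \<le> y" "f s = f z"
      using IVT'[of f x "f z" y] 2 xy by auto
    then have "\<bar>f y - f s\<bar> \<le> a * (z - x)"
      using level_bound[of s z] xy yz by auto
    then show ?thesis using s by linarith
  next
    case 3
    have "continuous_on {y..z} f" using sub xy by (intro continuous_on_subset[OF f]) auto
    then obtain s where s: "y \<le> s" "s \<le> z" "f s = f x"
      using IVT2'[of f z "f x" y] 3 yz by auto
    then have "\<bar>f y - f x\<bar> \<le> a * (z - x)"
      using level_bound[of x s] xy yz by auto
    then show ?thesis by linarith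
  qed
qed

lemma cond_P_oscillation:
  fixes f :: "real \<Rightarrow> real"
  assumes I: "connected I" and f: "continuous_on I f" and P: "cond_P a I f" and a: "a \<ge> 0"
    and x: "x \<in> I" and z: "z \<in> I" and xy: "x < y" and yz: "y < z"
  shows "\<bar>f x - f y\<bar> \<le> \<bar>f z - f x\<bar> + a * (z - x)"
    and "\<bar>f y - f z\<bar> \<le> \<bar>f z - f x\<bar> + a * (z - x)"
proof -
  have "f y \<le> max (f x) (f z) + a * (z - x)"
    by (rule cond_P_le_max[OF I f P a x z xy yz])
  moreover have "- f y \<le> max (- f x) (- f z) + a * (z - x)"
    using cond_P_le_max[OF I continuous_on_minus[OF f] _ a x z xy yz] P
    by (simp add: cond_P_uminus)
  ultimately show "\<bar>f x - f y\<bar> \<le> \<bar>f z - f x\<bar> + a * (z - x)"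
    and "\<bar>f y - f z\<bar> \<le> \<bar>f z - f x\<bar> + a * (z - x)"
    by (auto simp: max_def abs_if split: if_splits)
qed

lemma sqrt_sum_squares_le_mult:
  fixes u v a b c :: real
  assumes "0 \<le> u" "u \<le> a" "0 \<le> v" "v \<le> b + (c - 1) * a" "0 \<le> b" "c \<ge> 1"
  shows "sqrt (u\<^sup>2 + v\<^sup>2) \<le> c * sqrt (a\<^sup>2 + b\<^sup>2)"
proof -
  have "c\<^sup>2 * (a\<^sup>2 + b\<^sup>2) - (a\<^sup>2 + (b + (c - 1) * a)\<^sup>2)
        = (c - 1) * (a\<^sup>2 + b\<^sup>2 + (a - b)\<^sup>2 + (c - 1) * b\<^sup>2)"
    by algebra
  also have "\<dots> \<ge> 0" using assms by (intro mult_nonneg_nonneg add_nonneg_nonneg) auto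
  finally have "a\<^sup>2 + (b + (c - 1) * a)\<^sup>2 \<le> c\<^sup>2 * (a\<^sup>2 + b\<^sup>2)" by simp
  moreover have "u\<^sup>2 \<le> a\<^sup>2" "v\<^sup>2 \<le> (b + (c - 1) * a)\<^sup>2"
    using assms by (auto intro: power_mono)
  ultimately have "sqrt (u\<^sup>2 + v\<^sup>2) \<le> sqrt (c\<^sup>2 * (a\<^sup>2 + b\<^sup>2))"
    by (intro real_sqrt_le_mono) linarith
  also have "\<dots> = c * sqrt (a\<^sup>2 + b\<^sup>2)" using assms by (simp add: real_sqrt_mult)
  finally show ?thesis .
qed

lemma cond_P_imp_sym_c_monotone_graph:
  fixes f :: "real \<Rightarrow> real"
  assumes I: "connected I" and f: "continuous_on I f" and c: "c \<ge> 1"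
    and P: "cond_P (c - 1) I f"
  shows "sym_c_monotone c (graph_of I f)"
proof -
  define lt :: "real \<times> real \<Rightarrow> real \<times> real \<Rightarrow> bool" where "lt = (\<lambda>p q. fst p < fst q)"
  have dist_graph: "dist (s, f s) (u, f u) = sqrt (\<bar>s - u\<bar>\<^sup>2 + \<bar>f s - f u\<bar>\<^sup>2)" for s u
    by (simp add: dist_Pair_Pair dist_real_def)
  have bound: "max (dist (x, f x) (y, f y)) (dist (y, f y) (z, f z)) \<le> c * dist (x, f x) (z, f z)"
    if "x \<in> I" "z \<in> I" "x < y" "y < z" for x y z
  proof -
    note osc = cond_P_oscillation[OF I f P _ that]
    have "dist (x, f x) (z, f z) = sqrt ((z - x)\<^sup>2 + \<bar>f z - f x\<bar>\<^sup>2)"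
      by (simp add: dist_graph abs_minus_commute power2_commute)
    moreover have "dist (x, f x) (y, f y) \<le> c * sqrt ((z - x)\<^sup>2 + \<bar>f z - f x\<bar>\<^sup>2)"
      unfolding dist_graph using osc(1) c that by (intro sqrt_sum_squares_le_mult) auto
    moreover have "dist (y, f y) (z, f z) \<le> c * sqrt ((z - x)\<^sup>2 + \<bar>f z - f x\<bar>\<^sup>2)"
      unfolding dist_graph using osc(2) c that by (intro sqrt_sum_squares_le_mult) auto
    ultimately show ?thesis by simp
  qed
  have "strict_linear_order_on (graph_of I f) lt"
    unfolding strict_linear_order_on_def lt_def graph_of_def by auto
  moreover have "max (dist p q) (dist q r) \<le> c * dist p r"
    if "p \<in> graph_of I f" "q \<in> graph_of I f" "r \<in> graph_of I f" "lt p q" "lt q r" for p q r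
    using that bound unfolding graph_of_def lt_def by auto
  ultimately show ?thesis unfolding sym_c_monotone_def by blast
qed

theorem lemma2p3:
  fixes I :: "real set" and f :: "real \<Rightarrow> real" and c :: real
  assumes "is_interval I" and "\<exists>x\<in>I. \<exists>y\<in>I. x < y"
    and "continuous_on I f" and "c \<ge> 1"
  shows "(c_monotone c (graph_of I f) \<longrightarrow> cond_P c I f)
       \<and> (cond_P (c - 1) I f \<longrightarrow> sym_c_monotone c (graph_of I f))"
proof -
  have I: "connected I" using assms(1) by (simp add: is_interval_connected_1)
  show ?thesis
    using c_monotone_graph_imp_cond_P[OF I assms(3)] cond_P_imp_sym_c_monotone_graph[OF I assms(3,4)]
      assms(4) by auto
qed

end
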